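(* Let $(H,\mu)$ be a fuzzy Dedekind complete Riesz space, $(F,\nu)$ a fuzzy Archimedean laterally complete Riesz space, and $T:H\rightarrow F$ a fuzzy order continuous lattice homomorphism. If $H$ is a fuzzy order dense fuzzy Riesz subspace of a fuzzy Archimedean Riesz space $(E,\mu)$, then the formula $$T(x)=\sup\{T(h): h\in H,\ 0\le h\le x\},\qquad x\in E^+,$$ defines an extension of $T$ from $E$ into $F$ which is a fuzzy order continuous lattice homomorphism.
   Context: A fuzzy order on a real vector space $E$ is a map $\mu:E\times E\to[0,1]$ with $\mu(x,x)=1$; $\mu(x,y)+\mu(y,x)>1$ implies $x=y$; and $\mu(x,z)\ge\sup_{y}\min(\mu(x,y),\mu(y,z))$. Write $x\le y$ for $\mu(x,y)>\frac12$; upper bounds, suprema and infima are taken with respect to this relation. $(E,\mu)$ is a fuzzy ordered linear space if $\mu(x_1,x_2)>\frac12$ implies $\mu(x_1,x_2)\le\mu(x_1+x,x_2+x)$ for all $x$ and $\mu(x_1,x_2)\le\mu(\alpha x_1,\alpha x_2)$ for all $\alpha>0$; it is a fuzzy Riesz space if $x\vee y=\sup\{x,y\}$, $x\wedge y=\inf\{x,y\}$ exist for all $x,y$. $E^+=\{x:0\le x\}$, $|x|=x\vee(-x)$. Fuzzy Dedekind complete: every nonempty subset bounded above has a supremum. Fuzzy Archimedean: for every nonzero $x\in E^+$, $\{\lambda x:\lambda>0\}$ is not bounded above. Laterally complete: every set of pairwise disjoint positive elements has a supremum, where $x,y$ are disjoint if $|x|\wedge|y|=0$. A fuzzy Riesz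 subspace $H$ (vector subspace closed under $\vee,\wedge$, with the restricted order) is fuzzy order dense in $E$ if for each nonzero $x\in E^+$ there is a nonzero $g\in H$ with $0\le g$ and $\mu(g,x)>\frac12$. A fuzzy lattice homomorphism is a linear map with $T(x\vee y)=Tx\vee Ty$. A net $x_\alpha$ fuzzy order converges to $x$ if there is a net $y_\alpha$ decreasing with infimum $0$ and $\mu(|x_\alpha-x|,y_\alpha)>\frac12$ for all $\alpha$; $T$ is fuzzy order continuous if $x_\alpha\to0$ in fuzzy order implies $Tx_\alpha\to0$ in fuzzy order. *)

theory Defs
  imports Main "HOL-Analysis.Analysis"
begin

text \<open>Everything is stated relative to a carrier set S (UNIV for the whole space,
  a subset for a subspace with the restricted order).\<close>

definition fuzzy_order :: "('a \<Rightarrow> 'a \<Rightarrow> real) \<Rightarrow> 'a set \<Rightarrow> bool" where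
  "fuzzy_order \<mu> S \<longleftrightarrow>
     (\<forall>x\<in>S. \<forall>y\<in>S. 0 \<le> \<mu> x y \<and> \<mu> x y \<le> 1) \<and>
     (\<forall>x\<in>S. \<mu> x x = 1) \<and>
     (\<forall>x\<in>S. \<forall>y\<in>S. \<mu> x y + \<mu> y x > 1 \<longrightarrow> x = y) \<and>
     (\<forall>x\<in>S. \<forall>z\<in>S. \<forall>y\<in>S. min (\<mu> x y) (\<mu> y z) \<le> \<mu> x z)"

definition fleq :: "('a \<Rightarrow> 'a \<Rightarrow> real) \<Rightarrow> 'a \<Rightarrow> 'a \<Rightarrow> bool" where
  "fleq \<mu> x y \<longleftrightarrow> \<mu> x y > 1/2"

definition upper_bound :: "('a \<Rightarrow> 'a \<Rightarrow> real) \<Rightarrow> 'a set \<Rightarrow> 'a set \<Rightarrow> 'a \<Rightarrow> bool" where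
  "upper_bound \<mu> S A u \<longleftrightarrow> u \<in> S \<and> (\<forall>a\<in>A. fleq \<mu> a u)"

definition lower_bound :: "('a \<Rightarrow> 'a \<Rightarrow> real) \<Rightarrow> 'a set \<Rightarrow> 'a set \<Rightarrow> 'a \<Rightarrow> bool" where
  "lower_bound \<mu> S A l \<longleftrightarrow> l \<in> S \<and> (\<forall>a\<in>A. fleq \<mu> l a)"

definition is_sup :: "('a \<Rightarrow> 'a \<Rightarrow> real) \<Rightarrow> 'a set \<Rightarrow> 'a set \<Rightarrow> 'a \<Rightarrow> bool" where
  "is_sup \<mu> S A s \<longleftrightarrow> upper_bound \<mu> S A s \<and> (\<forall>u. upper_bound \<mu> S A u \<longrightarrow> fleq \<mu> s u)"

definition is_inf :: "('a \<Rightarrow> 'a \<Rightarrow> real) \<Rightarrow> 'a set \<Rightarrow> 'a set \<Rightarrow> 'a \<Rightarrow> bool" where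
  "is_inf \<mu> S A i \<longleftrightarrow> lower_bound \<mu> S A i \<and> (\<forall>l. lower_bound \<mu> S A l \<longrightarrow> fleq \<mu> l i)"

definition fuzzy_ordered_linear_space :: "('a::real_vector \<Rightarrow> 'a \<Rightarrow> real) \<Rightarrow> bool" where
  "fuzzy_ordered_linear_space \<mu> \<longleftrightarrow> fuzzy_order \<mu> UNIV \<and>
     (\<forall>x1 x2 x. \<mu> x1 x2 > 1/2 \<longrightarrow> \<mu> x1 x2 \<le> \<mu> (x1 + x) (x2 + x)) \<and>
     (\<forall>x1 x2 (\<alpha>::real). \<mu> x1 x2 > 1/2 \<and> \<alpha> > 0 \<longrightarrow> \<mu> x1 x2 \<le> \<mu> (\<alpha> *\<^sub>R x1) (\<alpha> *\<^sub>R x2))"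

definition fuzzy_riesz_space :: "('a::real_vector \<Rightarrow> 'a \<Rightarrow> real) \<Rightarrow> bool" where
  "fuzzy_riesz_space \<mu> \<longleftrightarrow> fuzzy_ordered_linear_space \<mu> \<and>
     (\<forall>x y. (\<exists>s. is_sup \<mu> UNIV {x, y} s) \<and> (\<exists>i. is_inf \<mu> UNIV {x, y} i))"

definition fsup :: "('a \<Rightarrow> 'a \<Rightarrow> real) \<Rightarrow> 'a \<Rightarrow> 'a \<Rightarrow> 'a" where
  "fsup \<mu> x y = (THE s. is_sup \<mu> UNIV {x, y} s)"

definition finf :: "('a \<Rightarrow> 'a \<Rightarrow> real) \<Rightarrow> 'a \<Rightarrow> 'a \<Rightarrow> 'a" where
  "finf \<mu> x y = (THE i. is_inf \<mu> UNIV {x, y} i)"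

definition fabs :: "('a::real_vector \<Rightarrow> 'a \<Rightarrow> real) \<Rightarrow> 'a \<Rightarrow> 'a" where
  "fabs \<mu> x = fsup \<mu> x (- x)"

definition fuzzy_dedekind_complete :: "('a \<Rightarrow> 'a \<Rightarrow> real) \<Rightarrow> 'a set \<Rightarrow> bool" where
  "fuzzy_dedekind_complete \<mu> S \<longleftrightarrow>
     (\<forall>A. A \<subseteq> S \<and> A \<noteq> {} \<and> (\<exists>u. upper_bound \<mu> S A u) \<longrightarrow> (\<exists>s. is_sup \<mu> S A s))"

definition fuzzy_archimedean :: "('a::real_vector \<Rightarrow> 'a \<Rightarrow> real) \<Rightarrow> bool" where
  "fuzzy_archimedean \<mu> \<longleftrightarrow>
     (\<forall>x. fleq \<mu> 0 x \<and> x \<noteq> 0 \<longrightarrow> \<not> (\<exists>u. upper_bound \<mu> UNIV {c *\<^sub>R x | c::real. c > 0} u))"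

definition fdisjoint :: "('a::real_vector \<Rightarrow> 'a \<Rightarrow> real) \<Rightarrow> 'a \<Rightarrow> 'a \<Rightarrow> bool" where
  "fdisjoint \<mu> x y \<longleftrightarrow> finf \<mu> (fabs \<mu> x) (fabs \<mu> y) = 0"

definition laterally_complete :: "('a::real_vector \<Rightarrow> 'a \<Rightarrow> real) \<Rightarrow> bool" where
  "laterally_complete \<mu> \<longleftrightarrow>
     (\<forall>A. A \<noteq> {} \<and> (\<forall>x\<in>A. fleq \<mu> 0 x) \<and> (\<forall>x\<in>A. \<forall>y\<in>A. x \<noteq> y \<longrightarrow> fdisjoint \<mu> x y)
          \<longrightarrow> (\<exists>s. is_sup \<mu> UNIV A s))"

definition fuzzy_riesz_subspace :: "('a::real_vector \<Rightarrow> 'a \<Rightarrow> real) \<Rightarrow> 'a set \<Rightarrow> bool" where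
  "fuzzy_riesz_subspace \<mu> H \<longleftrightarrow> subspace H \<and>
     (\<forall>x\<in>H. \<forall>y\<in>H. fsup \<mu> x y \<in> H \<and> finf \<mu> x y \<in> H)"

definition fuzzy_order_dense :: "('a::real_vector \<Rightarrow> 'a \<Rightarrow> real) \<Rightarrow> 'a set \<Rightarrow> bool" where
  "fuzzy_order_dense \<mu> H \<longleftrightarrow>
     (\<forall>x. fleq \<mu> 0 x \<and> x \<noteq> 0 \<longrightarrow> (\<exists>g\<in>H. g \<noteq> 0 \<and> fleq \<mu> 0 g \<and> fleq \<mu> g x))"

definition lattice_hom_on ::
  "('a::real_vector \<Rightarrow> 'a \<Rightarrow> real) \<Rightarrow> ('b::real_vector \<Rightarrow> 'b \<Rightarrow> real) \<Rightarrow> 'a set \<Rightarrow> ('a \<Rightarrow> 'b) \<Rightarrow> bool" where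
  "lattice_hom_on \<mu> \<nu> S T \<longleftrightarrow>
     (\<forall>x\<in>S. \<forall>y\<in>S. T (x + y) = T x + T y) \<and>
     (\<forall>x\<in>S. \<forall>c::real. T (c *\<^sub>R x) = c *\<^sub>R T x) \<and>
     (\<forall>x\<in>S. \<forall>y\<in>S. T (fsup \<mu> x y) = fsup \<nu> (T x) (T y))"

definition directed_index :: "'i set \<Rightarrow> ('i \<Rightarrow> 'i \<Rightarrow> bool) \<Rightarrow> bool" where
  "directed_index I le \<longleftrightarrow> I \<noteq> {} \<and> (\<forall>a\<in>I. le a a) \<and>
     (\<forall>a\<in>I. \<forall>b\<in>I. \<forall>c\<in>I. le a b \<and> le b c \<longrightarrow> le a c) \<and>
     (\<forall>a\<in>I. \<forall>b\<in>I. \<exists>c\<in>I. le a c \<and> le b c)"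

definition fuzzy_order_conv ::
  "('a::real_vector \<Rightarrow> 'a \<Rightarrow> real) \<Rightarrow> 'a set \<Rightarrow> 'i set \<Rightarrow> ('i \<Rightarrow> 'i \<Rightarrow> bool) \<Rightarrow> ('i \<Rightarrow> 'a) \<Rightarrow> 'a \<Rightarrow> bool" where
  "fuzzy_order_conv \<mu> S I le x x0 \<longleftrightarrow>
     (\<exists>y. (\<forall>\<alpha>\<in>I. y \<alpha> \<in> S) \<and>
          (\<forall>\<alpha>\<in>I. \<forall>\<beta>\<in>I. le \<alpha> \<beta> \<longrightarrow> fleq \<mu> (y \<beta>) (y \<alpha>)) \<and>
          is_inf \<mu> S (y ` I) 0 \<and>
          (\<forall>\<alpha>\<in>I. fleq \<mu> (fabs \<mu> (x \<alpha> - x0)) (y \<alpha>)))"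

definition fuzzy_order_continuous ::
  "'i itself \<Rightarrow> ('a::real_vector \<Rightarrow> 'a \<Rightarrow> real) \<Rightarrow> 'a set \<Rightarrow> ('b::real_vector \<Rightarrow> 'b \<Rightarrow> real) \<Rightarrow> ('a \<Rightarrow> 'b) \<Rightarrow> bool" where
  "fuzzy_order_continuous _ \<mu> S \<nu> T \<longleftrightarrow>
     (\<forall>(I::'i set) le x. directed_index I le \<and> (\<forall>\<alpha>\<in>I. x \<alpha> \<in> S) \<and> fuzzy_order_conv \<mu> S I le x 0
        \<longrightarrow> fuzzy_order_conv \<nu> UNIV I le (T \<circ> x) 0)"

end

(*
  For x \<ge> 0 the supremum of {T h | h \<in> H, 0 \<le> h \<le> x} exists because F is laterally complete.
  By Zorn's lemma choose a maximal family M of pairwise disjoint k \<in> H\<^sup>+ whose truncations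
  x \<sqinter> n k are bounded in H.  The band projections p\<^sub>k = sup\<^sub>n (x \<sqinter> n k) exist in H, which is
  an ideal of E since it is order dense and Dedekind complete; they are pairwise disjoint, hence so
  are the T p\<^sub>k, and these have a supremum s.  Every T h with 0 \<le> h \<le> x lies below s: by
  maximality of M and the Archimedean property of E, h - h \<sqinter> \<sigma> decreases to 0 in H as \<sigma> runs
  through {\<sigma> \<in> H. T \<sigma> \<le> s}, and order continuity of T turns this into T h - s \<le> 0.

  On E\<^sup>+ the resulting map is additive (Riesz decomposition), positively homogeneous and preserves
  finite infima (infinite distributivity in F), so x \<mapsto> S x\<^sup>+ - S x\<^sup>- is a lattice homomorphism
  extending T.  Its order continuity reduces to that of T by meeting a net decreasing to 0 with
  each h \<in> H\<^sup>+.
*)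

theory Submission
  imports Defs
begin

section \<open>Fuzzy Riesz spaces\<close>

abbreviation fpos :: "('a::real_vector \<Rightarrow> 'a \<Rightarrow> real) \<Rightarrow> 'a \<Rightarrow> 'a" where
  "fpos \<mu> x \<equiv> fsup \<mu> x 0"

abbreviation fneg :: "('a::real_vector \<Rightarrow> 'a \<Rightarrow> real) \<Rightarrow> 'a \<Rightarrow> 'a" where
  "fneg \<mu> x \<equiv> fsup \<mu> (- x) 0"

definition down_directed :: "('a \<Rightarrow> 'a \<Rightarrow> real) \<Rightarrow> 'a set \<Rightarrow> bool" where
  "down_directed \<mu> D \<longleftrightarrow> (\<forall>a\<in>D. \<forall>b\<in>D. \<exists>c\<in>D. fleq \<mu> c a \<and> fleq \<mu> c b)"

lemma is_sup_ub: "is_sup \<mu> S A s \<Longrightarrow> a \<in> A \<Longrightarrow> fleq \<mu> a s"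
  unfolding is_sup_def upper_bound_def by blast

lemma is_sup_least: "is_sup \<mu> S A s \<Longrightarrow> u \<in> S \<Longrightarrow> (\<And>a. a \<in> A \<Longrightarrow> fleq \<mu> a u) \<Longrightarrow> fleq \<mu> s u"
  unfolding is_sup_def upper_bound_def by blast

lemma is_sup_mem: "is_sup \<mu> S A s \<Longrightarrow> s \<in> S"
  unfolding is_sup_def upper_bound_def by blast

lemma is_supI:
  "s \<in> S \<Longrightarrow> (\<And>a. a \<in> A \<Longrightarrow> fleq \<mu> a s) \<Longrightarrow>
   (\<And>u. u \<in> S \<Longrightarrow> (\<And>a. a \<in> A \<Longrightarrow> fleq \<mu> a u) \<Longrightarrow> fleq \<mu> s u) \<Longrightarrow> is_sup \<mu> S A s"
  unfolding is_sup_def upper_bound_def by blast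

lemma is_inf_greatest: "is_inf \<mu> S A i \<Longrightarrow> l \<in> S \<Longrightarrow> (\<And>a. a \<in> A \<Longrightarrow> fleq \<mu> l a) \<Longrightarrow> fleq \<mu> l i"
  unfolding is_inf_def lower_bound_def by blast

lemma is_infI:
  "i \<in> S \<Longrightarrow> (\<And>a. a \<in> A \<Longrightarrow> fleq \<mu> i a) \<Longrightarrow>
   (\<And>l. l \<in> S \<Longrightarrow> (\<And>a. a \<in> A \<Longrightarrow> fleq \<mu> l a) \<Longrightarrow> fleq \<mu> l i) \<Longrightarrow> is_inf \<mu> S A i"
  unfolding is_inf_def lower_bound_def by blast

lemma is_sup_of_subset:
  "A \<subseteq> B \<Longrightarrow> is_sup \<mu> S A s \<Longrightarrow> (\<And>b. b \<in> B \<Longrightarrow> fleq \<mu> b s) \<Longrightarrow> is_sup \<mu> S B s"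
  unfolding is_sup_def upper_bound_def by blast

lemma maximal_pairwise_subset:
  "\<exists>M\<subseteq>A. pairwise R M \<and> (\<forall>x\<in>A. pairwise R (insert x M) \<longrightarrow> x \<in> M)"
proof -
  let ?\<A> = "{M. M \<subseteq> A \<and> pairwise R M}"
  have "\<Union>C \<in> ?\<A>" if "C \<in> chains ?\<A>" for C
    using that unfolding chains_def by (auto intro: pairwise_chain_Union)
  then obtain M where M: "M \<in> ?\<A>" and max: "\<forall>X\<in>?\<A>. M \<subseteq> X \<longrightarrow> X = M"
    using Zorn_Lemma[of ?\<A>] by blast
  have "x \<in> M" if "x \<in> A" "pairwise R (insert x M)" for x
    using M that max[rule_format, of "insert x M"] by blast
  with M show ?thesis by blast
qed

locale fuzzy_riesz =
  fixes \<mu> :: "'a::real_vector \<Rightarrow> 'a \<Rightarrow> real"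
  assumes riesz: "fuzzy_riesz_space \<mu>"
begin

lemma fuzzy_order_UNIV: "fuzzy_order \<mu> UNIV"
  using riesz unfolding fuzzy_riesz_space_def fuzzy_ordered_linear_space_def by auto

lemma fleq_refl [simp]: "fleq \<mu> x x"
  using fuzzy_order_UNIV unfolding fuzzy_order_def fleq_def by auto

lemma fleq_antisym: "fleq \<mu> x y \<Longrightarrow> fleq \<mu> y x \<Longrightarrow> x = y"
proof -
  assume "fleq \<mu> x y" "fleq \<mu> y x"
  then have "\<mu> x y + \<mu> y x > 1" unfolding fleq_def by linarith
  then show "x = y" using fuzzy_order_UNIV unfolding fuzzy_order_def by blast
qed

lemma fleq_trans: "fleq \<mu> x y \<Longrightarrow> fleq \<mu> y z \<Longrightarrow> fleq \<mu> x z"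
proof -
  assume "fleq \<mu> x y" "fleq \<mu> y z"
  then have "min (\<mu> x y) (\<mu> y z) > 1/2" unfolding fleq_def by simp
  moreover have "min (\<mu> x y) (\<mu> y z) \<le> \<mu> x z" using fuzzy_order_UNIV unfolding fuzzy_order_def by blast
  ultimately show ?thesis unfolding fleq_def by linarith
qed

lemma nonzero_not_fleq_0: "g \<noteq> 0 \<Longrightarrow> fleq \<mu> 0 g \<Longrightarrow> \<not> fleq \<mu> g 0"
  using fleq_antisym by blast

lemma fleq_add_right: "fleq \<mu> x y \<Longrightarrow> fleq \<mu> (x + z) (y + z)"
  using riesz unfolding fuzzy_riesz_space_def fuzzy_ordered_linear_space_def fleq_def
  by (meson order_less_le_trans)

lemma fleq_add_right_iff: "fleq \<mu> (x + z) (y + z) \<longleftrightarrow> fleq \<mu> x y"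
  using fleq_add_right[of x y z] fleq_add_right[of "x + z" "y + z" "- z"] by auto

lemma fleq_scaleR: "c > 0 \<Longrightarrow> fleq \<mu> x y \<Longrightarrow> fleq \<mu> (c *\<^sub>R x) (c *\<^sub>R y)"
  using riesz unfolding fuzzy_riesz_space_def fuzzy_ordered_linear_space_def fleq_def
  by (meson order_less_le_trans)

lemma fleq_scaleR_iff: "c > 0 \<Longrightarrow> fleq \<mu> (c *\<^sub>R x) (c *\<^sub>R y) \<longleftrightarrow> fleq \<mu> x y"
  using fleq_scaleR[of c x y] fleq_scaleR[of "inverse c" "c *\<^sub>R x" "c *\<^sub>R y"] by auto

lemma fleq_iff_diff_nonneg: "fleq \<mu> x y \<longleftrightarrow> fleq \<mu> 0 (y - x)"
  using fleq_add_right_iff[of x "- x" y] by simp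

lemma fleq_iff_diff_nonpos: "fleq \<mu> x y \<longleftrightarrow> fleq \<mu> (x - y) 0"
  using fleq_add_right_iff[of "x - y" y 0] by simp

lemma fleq_minus: "fleq \<mu> x y \<Longrightarrow> fleq \<mu> (- y) (- x)"
  using fleq_add_right[of x y "- x - y"] by simp

lemma fleq_minus_iff: "fleq \<mu> (- y) (- x) \<longleftrightarrow> fleq \<mu> x y"
  using fleq_minus[of x y] fleq_minus[of "- y" "- x"] by auto

lemma fleq_add_mono: "fleq \<mu> a b \<Longrightarrow> fleq \<mu> c d \<Longrightarrow> fleq \<mu> (a + c) (b + d)"
  using fleq_add_right[of a b c] fleq_add_right[of c d b] fleq_trans by (metis add.commute)

lemma fleq_diff_mono: "fleq \<mu> a b \<Longrightarrow> fleq \<mu> d c \<Longrightarrow> fleq \<mu> (a - c) (b - d)"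
  using fleq_add_mono[of a b "- c" "- d"] fleq_minus by auto

lemma fleq_scaleR_nonneg: "c \<ge> 0 \<Longrightarrow> fleq \<mu> x y \<Longrightarrow> fleq \<mu> (c *\<^sub>R x) (c *\<^sub>R y)"
  using fleq_scaleR[of c x y] by (cases "c = 0") auto

lemma scaleR_fnonneg: "c \<ge> 0 \<Longrightarrow> fleq \<mu> 0 x \<Longrightarrow> fleq \<mu> 0 (c *\<^sub>R x)"
  using fleq_scaleR_nonneg[of c 0 x] by simp

lemma fleq_scaleR_left: "fleq \<mu> 0 x \<Longrightarrow> a \<le> b \<Longrightarrow> fleq \<mu> (a *\<^sub>R x) (b *\<^sub>R x)"
  using scaleR_fnonneg[of "b - a" x] fleq_iff_diff_nonneg[of "a *\<^sub>R x" "b *\<^sub>R x"]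
  by (simp add: scaleR_diff_left)

lemma is_sup_unique: "is_sup \<mu> S A s \<Longrightarrow> is_sup \<mu> S A t \<Longrightarrow> s = t"
  unfolding is_sup_def by (blast intro: fleq_antisym)

lemma is_inf_unique: "is_inf \<mu> S A s \<Longrightarrow> is_inf \<mu> S A t \<Longrightarrow> s = t"
  unfolding is_inf_def by (blast intro: fleq_antisym)

lemma is_sup_fsup: "is_sup \<mu> UNIV {x, y} (fsup \<mu> x y)"
proof -
  obtain s where s: "is_sup \<mu> UNIV {x, y} s" using riesz unfolding fuzzy_riesz_space_def by blast
  show ?thesis
    unfolding fsup_def by (rule theI[where P="\<lambda>s. is_sup \<mu> UNIV {x, y} s", OF s]) (rule is_sup_unique[OF _ s])
qed

lemma is_inf_finf: "is_inf \<mu> UNIV {x, y} (finf \<mu> x y)"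
proof -
  obtain i where i: "is_inf \<mu> UNIV {x, y} i" using riesz unfolding fuzzy_riesz_space_def by blast
  show ?thesis
    unfolding finf_def by (rule theI[where P="\<lambda>i. is_inf \<mu> UNIV {x, y} i", OF i]) (rule is_inf_unique[OF _ i])
qed

lemma fsup_ge1: "fleq \<mu> x (fsup \<mu> x y)"
  and fsup_ge2: "fleq \<mu> y (fsup \<mu> x y)"
  and fsup_least: "fleq \<mu> x u \<Longrightarrow> fleq \<mu> y u \<Longrightarrow> fleq \<mu> (fsup \<mu> x y) u"
  using is_sup_fsup[of x y] unfolding is_sup_def upper_bound_def by auto

lemma finf_le1: "fleq \<mu> (finf \<mu> x y) x"
  and finf_le2: "fleq \<mu> (finf \<mu> x y) y"
  and finf_greatest: "fleq \<mu> l x \<Longrightarrow> fleq \<mu> l y \<Longrightarrow> fleq \<mu> l (finf \<mu> x y)"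
  using is_inf_finf[of x y] unfolding is_inf_def lower_bound_def by auto

lemma fsup_eqI:
  "fleq \<mu> x s \<Longrightarrow> fleq \<mu> y s \<Longrightarrow> (\<And>u. fleq \<mu> x u \<Longrightarrow> fleq \<mu> y u \<Longrightarrow> fleq \<mu> s u) \<Longrightarrow> fsup \<mu> x y = s"
  by (rule fleq_antisym[OF fsup_least]) (auto intro: fsup_ge1 fsup_ge2)

lemma finf_eqI:
  "fleq \<mu> i x \<Longrightarrow> fleq \<mu> i y \<Longrightarrow> (\<And>l. fleq \<mu> l x \<Longrightarrow> fleq \<mu> l y \<Longrightarrow> fleq \<mu> l i) \<Longrightarrow> finf \<mu> x y = i"
  by (rule fleq_antisym[OF _ finf_greatest]) (auto intro: finf_le1 finf_le2)

lemma fsup_commute: "fsup \<mu> x y = fsup \<mu> y x"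
  by (rule fsup_eqI[OF fsup_ge2 fsup_ge1 fsup_least])

lemma finf_commute: "finf \<mu> x y = finf \<mu> y x"
  by (rule finf_eqI[OF finf_le2 finf_le1 finf_greatest])

lemma fsup_absorb1: "fleq \<mu> y x \<Longrightarrow> fsup \<mu> x y = x"
  and fsup_absorb2: "fleq \<mu> x y \<Longrightarrow> fsup \<mu> x y = y"
  and finf_absorb1: "fleq \<mu> x y \<Longrightarrow> finf \<mu> x y = x"
  and finf_absorb2: "fleq \<mu> y x \<Longrightarrow> finf \<mu> x y = y"
  by (auto intro: fsup_eqI finf_eqI)

lemma finf_idem [simp]: "finf \<mu> x x = x"
  by (simp add: finf_absorb1)

lemma fsup_mono: "fleq \<mu> x x' \<Longrightarrow> fleq \<mu> y y' \<Longrightarrow> fleq \<mu> (fsup \<mu> x y) (fsup \<mu> x' y')"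
  by (rule fsup_least) (auto intro: fleq_trans[OF _ fsup_ge1] fleq_trans[OF _ fsup_ge2])

lemma finf_mono: "fleq \<mu> x x' \<Longrightarrow> fleq \<mu> y y' \<Longrightarrow> fleq \<mu> (finf \<mu> x y) (finf \<mu> x' y')"
  by (rule finf_greatest) (auto intro: fleq_trans[OF finf_le1] fleq_trans[OF finf_le2])

lemma fsup_add_right: "fsup \<mu> (x + z) (y + z) = fsup \<mu> x y + z"
proof (rule fsup_eqI)
  fix u assume "fleq \<mu> (x + z) u" "fleq \<mu> (y + z) u"
  then have "fleq \<mu> (fsup \<mu> x y) (u - z)"
    using fleq_add_right_iff[of _ z "u - z"] by (simp add: fsup_least)
  then show "fleq \<mu> (fsup \<mu> x y + z) u"
    using fleq_add_right_iff[of _ z "u - z"] by simp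
qed (simp_all add: fleq_add_right fsup_ge1 fsup_ge2)

lemma fsup_scaleR: "c > 0 \<Longrightarrow> fsup \<mu> (c *\<^sub>R x) (c *\<^sub>R y) = c *\<^sub>R fsup \<mu> x y"
proof (rule fsup_eqI)
  fix u assume c: "c > 0" and "fleq \<mu> (c *\<^sub>R x) u" "fleq \<mu> (c *\<^sub>R y) u"
  then have "fleq \<mu> (fsup \<mu> x y) (inverse c *\<^sub>R u)"
    using fleq_scaleR_iff[of c _ "inverse c *\<^sub>R u"] by (simp add: fsup_least)
  then show "fleq \<mu> (c *\<^sub>R fsup \<mu> x y) u"
    using fleq_scaleR_iff[of c _ "inverse c *\<^sub>R u"] c by simp
qed (simp_all add: fleq_scaleR fsup_ge1 fsup_ge2)

lemma fsup_minus: "fsup \<mu> (- x) (- y) = - finf \<mu> x y"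
proof (rule fsup_eqI)
  fix u assume "fleq \<mu> (- x) u" "fleq \<mu> (- y) u"
  then have "fleq \<mu> (- u) (finf \<mu> x y)"
    using fleq_minus_iff by (metis finf_greatest minus_minus)
  then show "fleq \<mu> (- finf \<mu> x y) u"
    using fleq_minus by fastforce
qed (simp_all add: fleq_minus finf_le1 finf_le2)

lemma finf_eq_minus_fsup: "finf \<mu> x y = - fsup \<mu> (- x) (- y)"
  by (simp add: fsup_minus)

lemma finf_add_right: "finf \<mu> (x + z) (y + z) = finf \<mu> x y + z"
  using fsup_add_right[of "- x" "- z" "- y"] by (simp add: finf_eq_minus_fsup)

lemma finf_scaleR: "c > 0 \<Longrightarrow> finf \<mu> (c *\<^sub>R x) (c *\<^sub>R y) = c *\<^sub>R finf \<mu> x y"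
  using fsup_scaleR[of c "- x" "- y"] by (simp add: finf_eq_minus_fsup)

lemma fsup_add_finf: "fsup \<mu> x y + finf \<mu> x y = x + y"
proof -
  have "fsup \<mu> x y = fsup \<mu> (- x) (- y) + (x + y)"
    using fsup_add_right[of "- x" "x + y" "- y"] by (simp add: fsup_commute)
  then show ?thesis by (simp add: finf_eq_minus_fsup)
qed

lemma diff_finf: "x - finf \<mu> x y = fpos \<mu> (x - y)"
  using fsup_add_right[of "- x" x "- y"] by (simp add: finf_eq_minus_fsup fsup_commute)

lemma diff_finf_fleq:
  assumes "fleq \<mu> h (x + y)" and "fleq \<mu> 0 y"
  shows "fleq \<mu> (h - finf \<mu> h x) y"
proof -
  have "fleq \<mu> (h - x) y" using fleq_add_right[OF assms(1), of "- x"] by simp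
  then show ?thesis unfolding diff_finf using assms(2) by (rule fsup_least)
qed

lemma fpos_diff_fneg: "fpos \<mu> x - fneg \<mu> x = x"
  using fsup_add_right[of "- x" x 0] by (simp add: fsup_commute algebra_simps)

lemma fpos_diff_of_finf_eq_0: "finf \<mu> p q = 0 \<Longrightarrow> fpos \<mu> (p - q) = p"
  using diff_finf[of p q] by simp

lemma finf_fpos_fneg: "finf \<mu> (fpos \<mu> x) (fneg \<mu> x) = 0"
  using diff_finf[of "fpos \<mu> x" "fneg \<mu> x"] by (simp add: fpos_diff_fneg)

lemma finf_eq_0_mono:
  "fleq \<mu> 0 a \<Longrightarrow> fleq \<mu> a a' \<Longrightarrow> fleq \<mu> 0 b \<Longrightarrow> finf \<mu> a' b = 0 \<Longrightarrow> finf \<mu> a b = 0"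
  using finf_mono[of a a' b b] finf_greatest[of 0 a b] by (auto intro: fleq_antisym)

lemma finf_eq_0_scaleR:
  assumes a: "fleq \<mu> 0 a" and b: "fleq \<mu> 0 b" and ab: "finf \<mu> a b = 0" and c: "c \<ge> 0"
  shows "finf \<mu> a (c *\<^sub>R b) = 0"
proof (cases "c \<le> 1")
  case True
  then have "fleq \<mu> (c *\<^sub>R b) b" using fleq_scaleR_left[OF b, of c 1] by simp
  then show ?thesis
    using finf_eq_0_mono[OF scaleR_fnonneg[OF c b] _ a] ab by (simp add: finf_commute)
next
  case False
  then have "fleq \<mu> a (c *\<^sub>R a)" using fleq_scaleR_left[OF a, of 1 c] by simp
  moreover have "finf \<mu> (c *\<^sub>R a) (c *\<^sub>R b) = 0" using finf_scaleR[of c a b] ab False by simp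
  ultimately show ?thesis using finf_eq_0_mono[OF a _ scaleR_fnonneg[OF c b]] by blast
qed

lemma fabs_eq_self: "fleq \<mu> 0 x \<Longrightarrow> fabs \<mu> x = x"
  unfolding fabs_def using fleq_minus[of 0 x] by (auto intro: fsup_absorb1 fleq_trans)

lemma fleq_fabs: "fleq \<mu> x (fabs \<mu> x)"
  unfolding fabs_def by (rule fsup_ge1)

lemma fabs_fnonneg: "fleq \<mu> 0 (fabs \<mu> x)"
proof -
  have "fleq \<mu> (x + - x) (fabs \<mu> x + fabs \<mu> x)"
    unfolding fabs_def by (rule fleq_add_mono[OF fsup_ge1 fsup_ge2])
  then have "fleq \<mu> ((1/2) *\<^sub>R 0) ((1/2) *\<^sub>R (2 *\<^sub>R fabs \<mu> x))"
    by (intro fleq_scaleR) (auto simp: scaleR_2)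
  then show ?thesis by simp
qed

lemma archimedean_eq_0:
  assumes "fuzzy_archimedean \<mu>" and c: "fleq \<mu> 0 c" and h: "\<And>n::nat. fleq \<mu> (real n *\<^sub>R c) h"
  shows "c = 0"
proof -
  have "fleq \<mu> (t *\<^sub>R c) h" for t :: real
    using fleq_scaleR_left[OF c real_nat_ceiling_ge[of t]] h by (blast intro: fleq_trans)
  then have "upper_bound \<mu> UNIV {t *\<^sub>R c | t::real. t > 0} h"
    unfolding upper_bound_def by blast
  then show ?thesis using assms(1) c unfolding fuzzy_archimedean_def by blast
qed

lemma is_sup_finf_right:
  assumes s: "is_sup \<mu> UNIV A s"
  shows "is_sup \<mu> UNIV ((\<lambda>a. finf \<mu> a b) ` A) (finf \<mu> s b)"
proof (rule is_supI)
  fix u assume u: "\<And>v. v \<in> (\<lambda>a. finf \<mu> a b) ` A \<Longrightarrow> fleq \<mu> v u"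
  have "fleq \<mu> a (u + fsup \<mu> s b - b)" if a: "a \<in> A" for a
  proof -
    have "fleq \<mu> (finf \<mu> a b + fsup \<mu> a b) (u + fsup \<mu> s b)"
      using u a is_sup_ub[OF s a] by (intro fleq_add_mono fsup_mono) auto
    then have "fleq \<mu> (a + b) (u + fsup \<mu> s b)"
      using fsup_add_finf[of a b] by (simp add: add.commute)
    then show ?thesis using fleq_add_right[of _ _ "- b"] by fastforce
  qed
  then have "fleq \<mu> s (u + fsup \<mu> s b - b)" using is_sup_least[OF s] by blast
  then have "fleq \<mu> (s + (b - fsup \<mu> s b)) (u + fsup \<mu> s b - b + (b - fsup \<mu> s b))"
    by (rule fleq_add_right)
  moreover have "s + b - fsup \<mu> s b = finf \<mu> s b"
    using fsup_add_finf[of s b] by (metis add.commute add_diff_cancel_right')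
  ultimately show "fleq \<mu> (finf \<mu> s b) u"
    by (simp add: algebra_simps)
qed (use is_sup_ub[OF s] finf_mono in auto)

lemma is_sup_add:
  assumes a: "is_sup \<mu> UNIV A a" and b: "is_sup \<mu> UNIV B b"
  shows "is_sup \<mu> UNIV {x + y | x y. x \<in> A \<and> y \<in> B} (a + b)"
proof (rule is_supI)
  fix u assume u: "\<And>z. z \<in> {x + y | x y. x \<in> A \<and> y \<in> B} \<Longrightarrow> fleq \<mu> z u"
  have "fleq \<mu> y (u - a)" if y: "y \<in> B" for y
  proof -
    have "fleq \<mu> x (u - y)" if "x \<in> A" for x
      using u[of "x + y"] that y fleq_add_right_iff[of x y "u - y"] by auto
    then have "fleq \<mu> a (u - y)" using is_sup_least[OF a] by blast
    then show ?thesis using fleq_add_right_iff[of a y "u - y"] fleq_add_right_iff[of y a "u - a"]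
      by (simp add: add.commute)
  qed
  then have "fleq \<mu> b (u - a)" using is_sup_least[OF b] by blast
  then show "fleq \<mu> (a + b) u" using fleq_add_right_iff[of b a "u - a"] by (simp add: add.commute)
qed (auto intro: fleq_add_mono is_sup_ub[OF a] is_sup_ub[OF b])

lemma is_sup_scaleR:
  assumes c: "c > 0" and s: "is_sup \<mu> UNIV A s"
  shows "is_sup \<mu> UNIV (scaleR c ` A) (c *\<^sub>R s)"
proof (rule is_supI)
  fix u assume "\<And>z. z \<in> scaleR c ` A \<Longrightarrow> fleq \<mu> z u"
  then have "fleq \<mu> x (inverse c *\<^sub>R u)" if "x \<in> A" for x
    using that fleq_scaleR_iff[OF c, of x "inverse c *\<^sub>R u"] c by auto
  then have "fleq \<mu> s (inverse c *\<^sub>R u)" using is_sup_least[OF s] by blast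
  then show "fleq \<mu> (c *\<^sub>R s) u" using fleq_scaleR_iff[OF c, of s "inverse c *\<^sub>R u"] c by simp
qed (auto intro: fleq_scaleR[OF c] is_sup_ub[OF s])

lemma directed_index_converse:
  "D \<noteq> {} \<Longrightarrow> down_directed \<mu> D \<Longrightarrow> directed_index D (\<lambda>a b. fleq \<mu> b a)"
  unfolding directed_index_def down_directed_def by (auto intro: fleq_trans)

lemma fuzzy_order_conv_of_is_inf:
  assumes "D \<subseteq> S" "\<And>d. d \<in> D \<Longrightarrow> fleq \<mu> 0 d" "is_inf \<mu> S D 0"
  shows "fuzzy_order_conv \<mu> S D (\<lambda>a b. fleq \<mu> b a) id 0"
  unfolding fuzzy_order_conv_def using assms by (intro exI[of _ id]) (auto simp: fabs_eq_self)

lemma fuzzy_order_conv_lower_bound: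
  assumes "fuzzy_order_conv \<mu> S I le x 0" and "l \<in> S" and "\<And>\<alpha>. \<alpha> \<in> I \<Longrightarrow> fleq \<mu> l (x \<alpha>)"
  shows "fleq \<mu> l 0"
proof -
  obtain y where "is_inf \<mu> S (y ` I) 0" and "\<forall>\<alpha>\<in>I. fleq \<mu> (fabs \<mu> (x \<alpha>)) (y \<alpha>)"
    using assms(1) unfolding fuzzy_order_conv_def by auto
  then show ?thesis
    using assms(2,3) by (auto elim!: is_inf_greatest intro: fleq_trans[OF _ fleq_trans[OF fleq_fabs]])
qed

lemma finf_truncation_eq_0:
  assumes x: "fleq \<mu> 0 x" and q: "fleq \<mu> 0 q" and j: "fleq \<mu> 0 j" and qj: "finf \<mu> q j = 0"
    and c: "c \<ge> 0"
  shows "finf \<mu> (finf \<mu> x (c *\<^sub>R j)) q = 0"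
proof -
  have "finf \<mu> (c *\<^sub>R j) q = 0" using finf_eq_0_scaleR[OF q j qj c] by (simp add: finf_commute)
  then show ?thesis
    using finf_eq_0_mono[OF finf_greatest[OF x scaleR_fnonneg[OF c j]] finf_le2 q] by blast
qed

lemma finf_scaleR_fpos_diff_fleq:
  assumes c: "c \<ge> 0" and z: "fleq \<mu> 0 z"
  shows "fleq \<mu> (finf \<mu> x (c *\<^sub>R fpos \<mu> (z - x))) z"
proof -
  let ?p = "c *\<^sub>R fpos \<mu> (z - x)"
  have "finf \<mu> (fpos \<mu> (x - z)) ?p = 0"
    using finf_eq_0_scaleR[OF fsup_ge2 fsup_ge2 finf_fpos_fneg[of "x - z"] c] by simp
  moreover have "fleq \<mu> (finf \<mu> (x - z) (?p - z)) (finf \<mu> (fpos \<mu> (x - z)) ?p)"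
    using fleq_diff_mono[OF fleq_refl z] by (intro finf_mono fsup_ge1) simp
  moreover have "finf \<mu> (x - z) (?p - z) = finf \<mu> x ?p - z"
    using finf_add_right[of x "- z" ?p] by simp
  ultimately show ?thesis using fleq_iff_diff_nonpos by simp
qed

end

section \<open>Order dense, Dedekind complete Riesz subspaces\<close>

locale dense_complete_subspace = fuzzy_riesz \<mu> for \<mu> :: "'a::real_vector \<Rightarrow> 'a \<Rightarrow> real" +
  fixes H :: "'a set"
  assumes riesz_subspace: "fuzzy_riesz_subspace \<mu> H"
    and order_dense: "fuzzy_order_dense \<mu> H"
    and dedekind_complete: "fuzzy_dedekind_complete \<mu> H"
begin

lemma subspace_H: "subspace H"
  using riesz_subspace unfolding fuzzy_riesz_subspace_def by blast

lemma zero_in_H [simp]: "0 \<in> H"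
  and add_in_H: "x \<in> H \<Longrightarrow> y \<in> H \<Longrightarrow> x + y \<in> H"
  and diff_in_H: "x \<in> H \<Longrightarrow> y \<in> H \<Longrightarrow> x - y \<in> H"
  and scaleR_in_H: "x \<in> H \<Longrightarrow> c *\<^sub>R x \<in> H"
  and minus_in_H: "x \<in> H \<Longrightarrow> - x \<in> H"
  using subspace_H by (auto intro: subspace_0 subspace_add subspace_diff subspace_scale subspace_neg)

lemma fsup_in_H: "x \<in> H \<Longrightarrow> y \<in> H \<Longrightarrow> fsup \<mu> x y \<in> H"
  and finf_in_H: "x \<in> H \<Longrightarrow> y \<in> H \<Longrightarrow> finf \<mu> x y \<in> H"
  using riesz_subspace unfolding fuzzy_riesz_subspace_def by blast+

lemma dense_below: "fleq \<mu> 0 x \<Longrightarrow> x \<noteq> 0 \<Longrightarrow> \<exists>g\<in>H. g \<noteq> 0 \<and> fleq \<mu> 0 g \<and> fleq \<mu> g x"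
  using order_dense unfolding fuzzy_order_dense_def by blast

lemma is_sup_H_least:
  assumes s: "is_sup \<mu> H A s" and ax: "\<And>a. a \<in> A \<Longrightarrow> fleq \<mu> a x"
  shows "fleq \<mu> s x"
proof -
  have sH: "s \<in> H" using s by (rule is_sup_mem)
  have "s - finf \<mu> s x = 0"
  proof (rule ccontr)
    assume "s - finf \<mu> s x \<noteq> 0"
    then obtain g where g: "g \<in> H" "g \<noteq> 0" "fleq \<mu> 0 g" "fleq \<mu> g (s - finf \<mu> s x)"
      using dense_below finf_le1 fleq_iff_diff_nonneg by blast
    have "fleq \<mu> a (s - g)" if "a \<in> A" for a
    proof -
      have "fleq \<mu> a (s - (s - finf \<mu> s x))"
        using finf_greatest[OF is_sup_ub[OF s that] ax[OF that]] by simp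
      then show ?thesis using fleq_diff_mono[OF fleq_refl g(4)] fleq_trans by blast
    qed
    then have "fleq \<mu> s (s - g)" using is_sup_least[OF s diff_in_H[OF sH g(1)]] by blast
    then have "fleq \<mu> g 0" using fleq_add_right_iff[of g "s - g" 0] by simp
    then show False using g nonzero_not_fleq_0 by blast
  qed
  then show ?thesis using finf_le2[of s x] by simp
qed

lemma order_ideal:
  assumes y: "fleq \<mu> 0 y" "fleq \<mu> y h" and h: "h \<in> H"
  shows "y \<in> H"
proof -
  define D where "D = {d \<in> H. fleq \<mu> 0 d \<and> fleq \<mu> d y}"
  have "0 \<in> D" "D \<subseteq> H" "upper_bound \<mu> H D h"
    unfolding D_def upper_bound_def using y h by (auto intro: fleq_trans)
  then obtain s where s: "is_sup \<mu> H D s"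
    using dedekind_complete unfolding fuzzy_dedekind_complete_def by blast
  have sH: "s \<in> H" and s0: "fleq \<mu> 0 s" using is_sup_mem[OF s] is_sup_ub[OF s \<open>0 \<in> D\<close>] by auto
  have sy: "fleq \<mu> s y" using is_sup_H_least[OF s] unfolding D_def by blast
  have "y - s = 0"
  proof (rule ccontr)
    assume "y - s \<noteq> 0"
    then obtain g where g: "g \<in> H" "g \<noteq> 0" "fleq \<mu> 0 g" "fleq \<mu> g (y - s)"
      using dense_below sy fleq_iff_diff_nonneg by blast
    have "fleq \<mu> (s + g) y" using fleq_add_right[OF g(4), of s] by (simp add: add.commute)
    then have "s + g \<in> D"
      unfolding D_def using add_in_H[OF sH g(1)] fleq_add_mono[OF s0 g(3)] by simp
    then have "fleq \<mu> g 0" using is_sup_ub[OF s] fleq_add_right_iff[of g s 0] by (simp add: add.commute)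
    then show False using g nonzero_not_fleq_0 by blast
  qed
  then show ?thesis using sH by simp
qed

lemma finf_in_H_of_fnonneg: "fleq \<mu> 0 x \<Longrightarrow> h \<in> H \<Longrightarrow> fleq \<mu> 0 h \<Longrightarrow> finf \<mu> x h \<in> H"
  by (rule order_ideal[OF finf_greatest finf_le2]) auto

lemma is_sup_H_finf_eq_0:
  assumes s: "is_sup \<mu> H A s" "fleq \<mu> 0 s" and b: "b \<in> H" "fleq \<mu> 0 b"
    and disj: "\<And>a. a \<in> A \<Longrightarrow> finf \<mu> a b = 0"
  shows "finf \<mu> s b = 0"
proof -
  have "fleq \<mu> a (fsup \<mu> s b - b)" if a: "a \<in> A" for a
  proof -
    have "fleq \<mu> (fsup \<mu> a b + - b) (fsup \<mu> s b + - b)"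
      using fsup_mono[OF is_sup_ub[OF s(1) a] fleq_refl] by (rule fleq_add_right)
    moreover have "a = fsup \<mu> a b - b" using fsup_add_finf[of a b] disj[OF a] by (simp add: algebra_simps)
    ultimately show ?thesis by simp
  qed
  then have "fleq \<mu> s (fsup \<mu> s b - b)"
    using is_sup_least[OF s(1)] is_sup_mem[OF s(1)] b(1) by (blast intro: diff_in_H fsup_in_H)
  then have "fleq \<mu> (s + (b - fsup \<mu> s b)) 0"
    using fleq_add_right[of _ _ "b - fsup \<mu> s b"] by fastforce
  moreover have "s + (b - fsup \<mu> s b) = finf \<mu> s b"
    using fsup_add_finf[of s b] by (simp add: algebra_simps)
  ultimately show ?thesis using finf_greatest[OF s(2) b(2)] by (simp add: fleq_antisym)
qed

definition truncation_bounded :: "'a \<Rightarrow> 'a set" where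
  "truncation_bounded x =
     {k \<in> H. fleq \<mu> 0 k \<and> k \<noteq> 0 \<and> (\<exists>b\<in>H. \<forall>n::nat. fleq \<mu> (finf \<mu> x (real n *\<^sub>R k)) b)}"

text \<open>Only for k \<in> truncation_bounded x is the supremum known to exist; otherwise
  band_proj x k is an unspecified value.\<close>

definition band_proj :: "'a \<Rightarrow> 'a \<Rightarrow> 'a" where
  "band_proj x k = (SOME p. is_sup \<mu> H (range (\<lambda>n::nat. finf \<mu> x (real n *\<^sub>R k))) p)"

lemma is_sup_band_proj:
  assumes x: "fleq \<mu> 0 x" and k: "k \<in> truncation_bounded x"
  shows "is_sup \<mu> H (range (\<lambda>n::nat. finf \<mu> x (real n *\<^sub>R k))) (band_proj x k)"
proof -
  obtain b where "b \<in> H" "\<forall>n::nat. fleq \<mu> (finf \<mu> x (real n *\<^sub>R k)) b"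
    using k unfolding truncation_bounded_def by blast
  then have "upper_bound \<mu> H (range (\<lambda>n::nat. finf \<mu> x (real n *\<^sub>R k))) b"
    unfolding upper_bound_def by auto
  moreover have "range (\<lambda>n::nat. finf \<mu> x (real n *\<^sub>R k)) \<subseteq> H"
    using k unfolding truncation_bounded_def
    by (auto intro!: finf_in_H_of_fnonneg[OF x] scaleR_in_H scaleR_fnonneg)
  ultimately have "\<exists>p. is_sup \<mu> H (range (\<lambda>n::nat. finf \<mu> x (real n *\<^sub>R k))) p"
    using dedekind_complete unfolding fuzzy_dedekind_complete_def by blast
  then show ?thesis unfolding band_proj_def by (rule someI_ex)
qed

lemma band_proj_in_H: "fleq \<mu> 0 x \<Longrightarrow> k \<in> truncation_bounded x \<Longrightarrow> band_proj x k \<in> H"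
  by (rule is_sup_mem[OF is_sup_band_proj])

lemma finf_fleq_band_proj:
  "fleq \<mu> 0 x \<Longrightarrow> k \<in> truncation_bounded x \<Longrightarrow> fleq \<mu> (finf \<mu> x (real n *\<^sub>R k)) (band_proj x k)"
  by (rule is_sup_ub[OF is_sup_band_proj]) auto

lemma band_proj_fnonneg: "fleq \<mu> 0 x \<Longrightarrow> k \<in> truncation_bounded x \<Longrightarrow> fleq \<mu> 0 (band_proj x k)"
  using finf_fleq_band_proj[of x k 0] by (simp add: finf_absorb2)

lemma band_proj_fleq: "fleq \<mu> 0 x \<Longrightarrow> k \<in> truncation_bounded x \<Longrightarrow> fleq \<mu> (band_proj x k) x"
  by (rule is_sup_H_least[OF is_sup_band_proj]) (auto simp: finf_le1)

lemma band_proj_finf_eq_0: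
  assumes x: "fleq \<mu> 0 x" and k: "k \<in> truncation_bounded x" and j: "j \<in> truncation_bounded x"
    and kj: "finf \<mu> k j = 0"
  shows "finf \<mu> (band_proj x k) (band_proj x j) = 0"
proof -
  have k0: "fleq \<mu> 0 k" and j0: "fleq \<mu> 0 j" and jH: "j \<in> H"
    using k j unfolding truncation_bounded_def by auto
  have jk: "finf \<mu> j k = 0" using kj finf_commute by metis
  have "finf \<mu> (band_proj x k) j = 0"
  proof (rule is_sup_H_finf_eq_0[OF is_sup_band_proj[OF x k] band_proj_fnonneg[OF x k] jH j0])
    fix a assume "a \<in> range (\<lambda>n::nat. finf \<mu> x (real n *\<^sub>R k))"
    then show "finf \<mu> a j = 0" using finf_truncation_eq_0[OF x j0 k0 jk] by auto
  qed
  then have "finf \<mu> (band_proj x j) (band_proj x k) = 0"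
  proof (intro is_sup_H_finf_eq_0[OF is_sup_band_proj[OF x j] band_proj_fnonneg[OF x j]
        band_proj_in_H[OF x k] band_proj_fnonneg[OF x k]])
    fix a assume "finf \<mu> (band_proj x k) j = 0" "a \<in> range (\<lambda>n::nat. finf \<mu> x (real n *\<^sub>R j))"
    then show "finf \<mu> a (band_proj x k) = 0"
      using finf_truncation_eq_0[OF x band_proj_fnonneg[OF x k] j0] by auto
  qed
  then show ?thesis by (simp add: finf_commute)
qed

text \<open>The witness k is the positive part of l - x/m for some m with m l \<not>\<le> x, which exists by
  the Archimedean property; the truncations x \<sqinter> n k stay below m l.\<close>

lemma exists_truncation_bounded_below:
  assumes arch: "fuzzy_archimedean \<mu>" and x: "fleq \<mu> 0 x"
    and l: "l \<in> H" "fleq \<mu> 0 l" "l \<noteq> 0"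
  shows "\<exists>k\<in>truncation_bounded x. fleq \<mu> k l"
proof -
  obtain m :: nat where m: "fpos \<mu> (real m *\<^sub>R l - x) \<noteq> 0"
  proof (rule ccontr)
    assume "\<not> thesis"
    with that have "fleq \<mu> (real m *\<^sub>R l - x) 0" for m :: nat
      using fsup_ge1 by metis
    then have "fleq \<mu> (real m *\<^sub>R l) x" for m :: nat
      using fleq_iff_diff_nonpos by blast
    then show False using archimedean_eq_0[OF arch l(2)] l(3) by blast
  qed
  have "m \<noteq> 0"
  proof
    assume "m = 0"
    then show False using m fleq_minus[OF x] by (simp add: fsup_absorb2)
  qed
  then have m0: "real m > 0" by simp
  define k where "k = inverse (real m) *\<^sub>R fpos \<mu> (real m *\<^sub>R l - x)"
  have ml0: "fleq \<mu> 0 (real m *\<^sub>R l)" using scaleR_fnonneg l(2) by simp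
  have k0: "fleq \<mu> 0 k" unfolding k_def using m0 by (simp add: scaleR_fnonneg fsup_ge2)
  have "fleq \<mu> (fpos \<mu> (real m *\<^sub>R l - x)) (real m *\<^sub>R l)"
    using fleq_diff_mono[OF fleq_refl x] ml0 by (intro fsup_least) simp_all
  then have kl: "fleq \<mu> k l"
    unfolding k_def using fleq_scaleR[of "inverse (real m)"] m0 by fastforce
  have "fleq \<mu> (finf \<mu> x (real n *\<^sub>R k)) (real m *\<^sub>R l)" for n :: nat
    using finf_scaleR_fpos_diff_fleq[of "real n / real m" "real m *\<^sub>R l" x] ml0
    unfolding k_def by (simp add: divide_inverse_commute mult.commute)
  moreover have "k \<noteq> 0" unfolding k_def using m m0 by simp
  ultimately have "k \<in> truncation_bounded x"
    unfolding truncation_bounded_def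
    using order_ideal[OF k0 kl l(1)] k0 scaleR_in_H[OF l(1)] by blast
  with kl show ?thesis by blast
qed

lemma finf_band_complement_eq_0:
  assumes arch: "fuzzy_archimedean \<mu>" and x: "fleq \<mu> 0 x" and k: "k \<in> truncation_bounded x"
    and h: "fleq \<mu> 0 h" "fleq \<mu> h x"
    and l: "fleq \<mu> 0 l" "fleq \<mu> l (h - finf \<mu> h (band_proj x k))"
  shows "finf \<mu> l k = 0"
proof -
  let ?c = "finf \<mu> l k"
  have k0: "fleq \<mu> 0 k" using k unfolding truncation_bounded_def by blast
  have "fleq \<mu> (real n *\<^sub>R ?c) h" for n :: nat
  proof (induction n)
    case 0
    show ?case using h(1) by simp
  next
    case (Suc m)
    have "fleq \<mu> (real m *\<^sub>R ?c) (finf \<mu> x (real m *\<^sub>R k))"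
      using Suc.IH h(2) fleq_scaleR_nonneg[OF _ finf_le2]
      by (intro finf_greatest) (auto intro: fleq_trans)
    then have "fleq \<mu> (real m *\<^sub>R ?c) (finf \<mu> h (band_proj x k))"
      using Suc.IH finf_fleq_band_proj[OF x k] by (blast intro: finf_greatest fleq_trans)
    moreover have "fleq \<mu> ?c (h - finf \<mu> h (band_proj x k))"
      using finf_le1 l(2) by (rule fleq_trans)
    ultimately have "fleq \<mu> (real m *\<^sub>R ?c + ?c) h"
      using fleq_add_mono by fastforce
    then show ?case by (simp add: algebra_simps)
  qed
  then show ?thesis using archimedean_eq_0[OF arch finf_greatest[OF l(1) k0]] by blast
qed

definition maximal_disjoint_family :: "'a \<Rightarrow> 'a set \<Rightarrow> bool" where
  "maximal_disjoint_family x M \<longleftrightarrow>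
     M \<subseteq> truncation_bounded x \<and> pairwise (\<lambda>a b. finf \<mu> a b = 0) M \<and>
     (\<forall>k\<in>truncation_bounded x. pairwise (\<lambda>a b. finf \<mu> a b = 0) (insert k M) \<longrightarrow> k \<in> M)"

lemma exists_maximal_disjoint_family: "\<exists>M. maximal_disjoint_family x M"
  unfolding maximal_disjoint_family_def
  using maximal_pairwise_subset[where A="truncation_bounded x" and R="\<lambda>a b. finf \<mu> a b = 0"] by blast

lemma maximal_disjoint_complement_eq_0:
  assumes arch: "fuzzy_archimedean \<mu>" and x: "fleq \<mu> 0 x"
    and M: "maximal_disjoint_family x M"
    and h: "fleq \<mu> 0 h" "fleq \<mu> h x"
    and l: "l \<in> H" "fleq \<mu> 0 l" "\<And>k. k \<in> M \<Longrightarrow> fleq \<mu> l (h - finf \<mu> h (band_proj x k))"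
  shows "l = 0"
proof (rule ccontr)
  assume "l \<noteq> 0"
  then obtain k where k: "k \<in> truncation_bounded x" "fleq \<mu> k l"
    using exists_truncation_bounded_below[OF arch x l(1,2)] by blast
  have "finf \<mu> k j = 0" if "j \<in> M" for j
    using finf_band_complement_eq_0[OF arch x _ h l(2) l(3)] that M k
    unfolding maximal_disjoint_family_def truncation_bounded_def by (blast intro: finf_eq_0_mono)
  then have "pairwise (\<lambda>a b. finf \<mu> a b = 0) (insert k M)"
    using M unfolding maximal_disjoint_family_def by (auto simp: pairwise_insert finf_commute)
  then have "finf \<mu> k k = 0"
    using M k(1) \<open>\<And>j. j \<in> M \<Longrightarrow> finf \<mu> k j = 0\<close> unfolding maximal_disjoint_family_def by blast
  then show False using k(1) unfolding truncation_bounded_def by simp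
qed

lemma is_inf_band_complements:
  assumes arch: "fuzzy_archimedean \<mu>" and x: "fleq \<mu> 0 x"
    and M: "maximal_disjoint_family x M"
    and h: "fleq \<mu> 0 h" "fleq \<mu> h x"
    and I: "\<And>k. k \<in> M \<Longrightarrow> band_proj x k \<in> I"
  shows "is_inf \<mu> H ((\<lambda>\<sigma>. h - finf \<mu> h \<sigma>) ` I) 0"
proof (rule is_infI)
  have complement_fnonneg: "fleq \<mu> 0 (h - finf \<mu> h \<sigma>)" for \<sigma>
    using finf_le1 fleq_iff_diff_nonneg by blast
  then show "\<And>d. d \<in> (\<lambda>\<sigma>. h - finf \<mu> h \<sigma>) ` I \<Longrightarrow> fleq \<mu> 0 d" by blast
  fix l assume l: "l \<in> H" "\<And>d. d \<in> (\<lambda>\<sigma>. h - finf \<mu> h \<sigma>) ` I \<Longrightarrow> fleq \<mu> l d"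
  have "fleq \<mu> (fpos \<mu> l) (h - finf \<mu> h (band_proj x k))" if "k \<in> M" for k
    using l(2) I[OF that] complement_fnonneg by (blast intro: fsup_least)
  then have "fpos \<mu> l = 0"
    using maximal_disjoint_complement_eq_0[OF arch x M h] fsup_in_H[OF l(1) zero_in_H] fsup_ge2
    by blast
  then show "fleq \<mu> l 0" using fsup_ge1[of l 0] by simp
qed simp

end

section \<open>Extension of order continuous lattice homomorphisms\<close>

locale lattice_hom_extension =
  E: dense_complete_subspace \<mu> H + F: fuzzy_riesz \<nu>
  for \<mu> :: "'a::real_vector \<Rightarrow> 'a \<Rightarrow> real" and H and \<nu> :: "'b::real_vector \<Rightarrow> 'b \<Rightarrow> real" +
  fixes T :: "'a \<Rightarrow> 'b"
  assumes archimedean: "fuzzy_archimedean \<mu>"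
    and laterally_complete: "laterally_complete \<nu>"
    and hom: "lattice_hom_on \<mu> \<nu> H T"
    and order_continuous: "fuzzy_order_continuous TYPE('a) \<mu> H \<nu> T"
begin

lemma T_add: "x \<in> H \<Longrightarrow> y \<in> H \<Longrightarrow> T (x + y) = T x + T y"
  and T_scaleR: "x \<in> H \<Longrightarrow> T (c *\<^sub>R x) = c *\<^sub>R T x"
  and T_fsup: "x \<in> H \<Longrightarrow> y \<in> H \<Longrightarrow> T (fsup \<mu> x y) = fsup \<nu> (T x) (T y)"
  using hom unfolding lattice_hom_on_def by blast+

lemma T_zero [simp]: "T 0 = 0"
  using T_scaleR[of 0 0] by simp

lemma T_minus: "x \<in> H \<Longrightarrow> T (- x) = - T x"
  using T_scaleR[of x "- 1"] by simp

lemma T_diff: "x \<in> H \<Longrightarrow> y \<in> H \<Longrightarrow> T (x - y) = T x - T y"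
  using T_add[of x "- y"] by (simp add: T_minus E.minus_in_H)

lemma T_finf: "x \<in> H \<Longrightarrow> y \<in> H \<Longrightarrow> T (finf \<mu> x y) = finf \<nu> (T x) (T y)"
  by (simp add: E.finf_eq_minus_fsup F.finf_eq_minus_fsup T_minus T_fsup E.minus_in_H E.fsup_in_H)

lemma T_mono: "x \<in> H \<Longrightarrow> y \<in> H \<Longrightarrow> fleq \<mu> x y \<Longrightarrow> fleq \<nu> (T x) (T y)"
  by (metis T_fsup E.fsup_absorb2 F.fsup_ge1)

lemma T_fnonneg: "x \<in> H \<Longrightarrow> fleq \<mu> 0 x \<Longrightarrow> fleq \<nu> 0 (T x)"
  using T_mono[of 0 x] by simp

text \<open>The continuity hypothesis only covers nets indexed by the type of E, so the set D serves
  as its own index set, directed by the reverse order.\<close>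

lemma is_inf_T_image:
  assumes D: "D \<subseteq> H" "D \<noteq> {}" "\<And>d. d \<in> D \<Longrightarrow> fleq \<mu> 0 d" "down_directed \<mu> D" "is_inf \<mu> H D 0"
  shows "is_inf \<nu> UNIV (T ` D) 0"
proof (rule is_infI)
  have "directed_index D (\<lambda>a b. fleq \<mu> b a) \<and> (\<forall>d\<in>D. id d \<in> H) \<and>
        fuzzy_order_conv \<mu> H D (\<lambda>a b. fleq \<mu> b a) id 0"
    using E.directed_index_converse[OF D(2,4)] E.fuzzy_order_conv_of_is_inf[OF D(1,3,5)] D(1) by auto
  then have "fuzzy_order_conv \<nu> UNIV D (\<lambda>a b. fleq \<mu> b a) (T \<circ> id) 0"
    using order_continuous unfolding fuzzy_order_continuous_def by blast
  then show "fleq \<nu> l 0" if "\<And>a. a \<in> T ` D \<Longrightarrow> fleq \<nu> l a" for l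
    using that by (auto intro: F.fuzzy_order_conv_lower_bound)
qed (use D T_fnonneg in auto)

definition T_below :: "'a \<Rightarrow> 'b set" where
  "T_below x = {T h | h. h \<in> H \<and> fleq \<mu> 0 h \<and> fleq \<mu> h x}"

lemma zero_in_T_below: "fleq \<mu> 0 x \<Longrightarrow> 0 \<in> T_below x"
  unfolding T_below_def by (auto intro!: exI[of _ 0])

lemma T_fleq_of_band_bound:
  assumes x: "fleq \<mu> 0 x"
    and M: "E.maximal_disjoint_family x M"
    and s: "\<And>k. k \<in> M \<Longrightarrow> fleq \<nu> (T (E.band_proj x k)) s" "fleq \<nu> 0 s"
    and h: "h \<in> H" "fleq \<mu> 0 h" "fleq \<mu> h x"
  shows "fleq \<nu> (T h) s"
proof -
  define I where "I = {\<sigma> \<in> H. fleq \<nu> (T \<sigma>) s}"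
  define D where "D = (\<lambda>\<sigma>. h - finf \<mu> h \<sigma>) ` I"
  have "0 \<in> I" unfolding I_def using s(2) by simp
  have fsup_in_I: "fsup \<mu> \<sigma> \<tau> \<in> I" if "\<sigma> \<in> I" "\<tau> \<in> I" for \<sigma> \<tau>
    using that unfolding I_def by (auto simp: T_fsup E.fsup_in_H intro: F.fsup_least)
  have "down_directed \<mu> D"
    unfolding down_directed_def D_def
    using fsup_in_I E.fsup_ge1 E.fsup_ge2
    by (blast intro: E.fleq_diff_mono[OF E.fleq_refl] E.finf_mono[OF E.fleq_refl])
  moreover have "D \<subseteq> H" unfolding D_def I_def using h(1) by (auto intro: E.diff_in_H E.finf_in_H)
  moreover have "fleq \<mu> 0 d" if "d \<in> D" for d
    using that E.finf_le1 E.fleq_iff_diff_nonneg unfolding D_def by blast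
  moreover have "is_inf \<mu> H D 0"
    unfolding D_def using M s(1) h(2,3)
    unfolding E.maximal_disjoint_family_def
    by (intro E.is_inf_band_complements[OF archimedean x M])
      (auto simp: I_def E.band_proj_in_H[OF x])
  ultimately have inf: "is_inf \<nu> UNIV (T ` D) 0"
    using \<open>0 \<in> I\<close> unfolding D_def by (intro is_inf_T_image) auto
  have "fleq \<nu> (T h - s) (T (h - finf \<mu> h \<sigma>))" if "\<sigma> \<in> I" for \<sigma>
  proof -
    have "fleq \<nu> (T (finf \<mu> h \<sigma>)) s"
      using that h(1) T_mono[OF E.finf_in_H _ E.finf_le2] unfolding I_def by (blast intro: F.fleq_trans)
    then show ?thesis
      using that h(1) unfolding I_def by (simp add: T_diff E.finf_in_H F.fleq_diff_mono)
  qed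
  then have "fleq \<nu> (T h - s) 0"
    using is_inf_greatest[OF inf] unfolding D_def by blast
  then show ?thesis using F.fleq_iff_diff_nonpos by blast
qed

lemma T_below_has_sup:
  assumes x: "fleq \<mu> 0 x"
  shows "\<exists>s. is_sup \<nu> UNIV (T_below x) s"
proof -
  obtain M where M: "E.maximal_disjoint_family x M" using E.exists_maximal_disjoint_family by blast
  then have M_sub: "M \<subseteq> E.truncation_bounded x" and M_disj: "pairwise (\<lambda>a b. finf \<mu> a b = 0) M"
    unfolding E.maximal_disjoint_family_def by auto
  define A where "A = insert 0 ((\<lambda>k. T (E.band_proj x k)) ` M)"
  have A_sub: "A \<subseteq> T_below x"
  proof
    fix a assume "a \<in> A"
    then consider "a = 0" | k where "k \<in> M" "a = T (E.band_proj x k)" unfolding A_def by blast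
    then show "a \<in> T_below x"
    proof cases
      case 2
      then show ?thesis
        unfolding T_below_def using M_sub E.band_proj_in_H[OF x] E.band_proj_fnonneg[OF x]
          E.band_proj_fleq[OF x] by blast
    qed (simp add: zero_in_T_below[OF x])
  qed
  then have A_pos: "fleq \<nu> 0 a" if "a \<in> A" for a
    using that unfolding T_below_def by (auto intro: T_fnonneg)
  have A_disj: "fdisjoint \<nu> a b" if ab: "a \<in> A" "b \<in> A" "a \<noteq> b" for a b
  proof -
    consider "a = 0" | "b = 0"
      | k j where "k \<in> M" "j \<in> M" "a = T (E.band_proj x k)" "b = T (E.band_proj x j)"
      using ab(1,2) unfolding A_def by blast
    then have "finf \<nu> a b = 0"
    proof cases
      case 3
      then have "finf \<mu> k j = 0" using ab(3) M_disj by (auto dest: pairwiseD)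
      moreover have "k \<in> E.truncation_bounded x" "j \<in> E.truncation_bounded x" using 3 M_sub by auto
      ultimately show ?thesis
        using 3 by (simp add: T_finf[symmetric] E.band_proj_in_H[OF x] E.band_proj_finf_eq_0[OF x])
    qed (use A_pos ab in \<open>auto simp: F.finf_absorb1 F.finf_absorb2\<close>)
    then show ?thesis unfolding fdisjoint_def using A_pos ab by (simp add: F.fabs_eq_self)
  qed
  have "A \<noteq> {}" unfolding A_def by blast
  then have "A \<noteq> {} \<and> (\<forall>a\<in>A. fleq \<nu> 0 a) \<and> (\<forall>a\<in>A. \<forall>b\<in>A. a \<noteq> b \<longrightarrow> fdisjoint \<nu> a b)"
    using A_pos A_disj by simp
  then obtain s where s: "is_sup \<nu> UNIV A s"
    using laterally_complete unfolding laterally_complete_def by (elim allE[of _ A] impE) auto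
  have "fleq \<nu> w s" if "w \<in> T_below x" for w
    using that T_fleq_of_band_bound[OF x M] is_sup_ub[OF s] unfolding T_below_def A_def by auto
  then show ?thesis using is_sup_of_subset[OF A_sub s] by blast
qed

definition T_ext_pos :: "'a \<Rightarrow> 'b" where
  "T_ext_pos x = (THE s. is_sup \<nu> UNIV (T_below x) s)"

lemma is_sup_T_ext_pos: "fleq \<mu> 0 x \<Longrightarrow> is_sup \<nu> UNIV (T_below x) (T_ext_pos x)"
proof -
  assume "fleq \<mu> 0 x"
  then obtain s where s: "is_sup \<nu> UNIV (T_below x) s" using T_below_has_sup by blast
  show ?thesis
    unfolding T_ext_pos_def
    by (rule theI[where P="\<lambda>s. is_sup \<nu> UNIV (T_below x) s", OF s]) (rule F.is_sup_unique[OF _ s])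
qed

lemma T_ext_pos_eqI: "fleq \<mu> 0 x \<Longrightarrow> is_sup \<nu> UNIV (T_below x) s \<Longrightarrow> T_ext_pos x = s"
  using is_sup_T_ext_pos F.is_sup_unique by blast

lemma T_ext_pos_eq_T:
  assumes h: "h \<in> H" "fleq \<mu> 0 h"
  shows "T_ext_pos h = T h"
proof (rule T_ext_pos_eqI[OF h(2)], rule is_supI)
  have "T h \<in> T_below h" unfolding T_below_def using h by auto
  then show "\<And>u. (\<And>w. w \<in> T_below h \<Longrightarrow> fleq \<nu> w u) \<Longrightarrow> fleq \<nu> (T h) u" by blast
qed (auto simp: T_below_def h(1) T_mono)

lemma T_ext_pos_fnonneg: "fleq \<mu> 0 x \<Longrightarrow> fleq \<nu> 0 (T_ext_pos x)"
  using is_sup_ub[OF is_sup_T_ext_pos zero_in_T_below] by blast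

lemma T_ext_pos_mono:
  assumes x: "fleq \<mu> 0 x" and xy: "fleq \<mu> x y"
  shows "fleq \<nu> (T_ext_pos x) (T_ext_pos y)"
proof -
  have "T_below x \<subseteq> T_below y" unfolding T_below_def using xy E.fleq_trans by blast
  then show ?thesis
    using is_sup_least[OF is_sup_T_ext_pos[OF x]] is_sup_ub[OF is_sup_T_ext_pos[OF E.fleq_trans[OF x xy]]]
    by blast
qed

lemma T_below_add:
  assumes x: "fleq \<mu> 0 x" and y: "fleq \<mu> 0 y"
  shows "T_below (x + y) = {a + b | a b. a \<in> T_below x \<and> b \<in> T_below y}"
proof (intro equalityI subsetI)
  fix w assume "w \<in> T_below (x + y)"
  then obtain h where h: "w = T h" "h \<in> H" "fleq \<mu> 0 h" "fleq \<mu> h (x + y)"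
    unfolding T_below_def by blast
  have h1: "finf \<mu> h x \<in> H" using E.finf_in_H_of_fnonneg[OF x h(2,3)] by (simp add: E.finf_commute)
  have "T (finf \<mu> h x) \<in> T_below x"
    unfolding T_below_def using h1 E.finf_greatest[OF h(3) x] E.finf_le2 by blast
  moreover have "T (h - finf \<mu> h x) \<in> T_below y"
    unfolding T_below_def using E.diff_in_H[OF h(2) h1] E.finf_le1 E.fleq_iff_diff_nonneg
      E.diff_finf_fleq[OF h(4) y] by blast
  moreover have "w = T (finf \<mu> h x) + T (h - finf \<mu> h x)"
    using h(1) T_diff[OF h(2) h1] by simp
  ultimately show "w \<in> {a + b | a b. a \<in> T_below x \<and> b \<in> T_below y}" by blast
next
  fix w assume "w \<in> {a + b | a b. a \<in> T_below x \<and> b \<in> T_below y}"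
  then obtain a b where "w = T a + T b" "a \<in> H" "fleq \<mu> 0 a" "fleq \<mu> a x"
    "b \<in> H" "fleq \<mu> 0 b" "fleq \<mu> b y"
    unfolding T_below_def by blast
  then have "w = T (a + b)" "a + b \<in> H" "fleq \<mu> 0 (a + b)" "fleq \<mu> (a + b) (x + y)"
    using E.fleq_add_mono[of 0 a 0 b] E.fleq_add_mono[of a x b y] by (auto simp: T_add E.add_in_H)
  then show "w \<in> T_below (x + y)" unfolding T_below_def by blast
qed

lemma T_ext_pos_add:
  "fleq \<mu> 0 x \<Longrightarrow> fleq \<mu> 0 y \<Longrightarrow> T_ext_pos (x + y) = T_ext_pos x + T_ext_pos y"
  using T_ext_pos_eqI E.fleq_add_mono[of 0 x 0 y] F.is_sup_add[OF is_sup_T_ext_pos is_sup_T_ext_pos]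
  by (simp add: T_below_add)

lemma T_below_scaleR:
  assumes c: "c > 0"
  shows "T_below (c *\<^sub>R x) = scaleR c ` T_below x"
proof (intro equalityI subsetI)
  fix w assume "w \<in> T_below (c *\<^sub>R x)"
  then obtain h where h: "w = T h" "h \<in> H" "fleq \<mu> 0 h" "fleq \<mu> h (c *\<^sub>R x)"
    unfolding T_below_def by blast
  have "fleq \<mu> (inverse c *\<^sub>R h) x"
    using E.fleq_scaleR_iff[OF c, of "inverse c *\<^sub>R h" x] h(4) c by simp
  moreover have "inverse c *\<^sub>R h \<in> H" "fleq \<mu> 0 (inverse c *\<^sub>R h)"
    using h(2,3) c by (auto intro: E.scaleR_in_H E.scaleR_fnonneg)
  ultimately have "T (inverse c *\<^sub>R h) \<in> T_below x" unfolding T_below_def by blast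
  moreover have "w = c *\<^sub>R T (inverse c *\<^sub>R h)" using h(1,2) c by (simp add: T_scaleR)
  ultimately show "w \<in> scaleR c ` T_below x" by blast
next
  fix w assume "w \<in> scaleR c ` T_below x"
  then obtain h where "w = c *\<^sub>R T h" "h \<in> H" "fleq \<mu> 0 h" "fleq \<mu> h x"
    unfolding T_below_def by blast
  then show "w \<in> T_below (c *\<^sub>R x)"
    unfolding T_below_def using c
    by (auto simp: T_scaleR intro!: exI[of _ "c *\<^sub>R h"] E.scaleR_in_H E.scaleR_fnonneg E.fleq_scaleR)
qed

lemma T_ext_pos_scaleR: "c > 0 \<Longrightarrow> fleq \<mu> 0 x \<Longrightarrow> T_ext_pos (c *\<^sub>R x) = c *\<^sub>R T_ext_pos x"
  using T_ext_pos_eqI E.scaleR_fnonneg[of c x] F.is_sup_scaleR[OF _ is_sup_T_ext_pos]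
  by (simp add: T_below_scaleR)

lemma T_ext_pos_zero [simp]: "T_ext_pos 0 = 0"
  using T_ext_pos_eq_T[of 0] by simp

lemma T_ext_pos_finf:
  assumes a: "fleq \<mu> 0 a" and b: "fleq \<mu> 0 b"
  shows "T_ext_pos (finf \<mu> a b) = finf \<nu> (T_ext_pos a) (T_ext_pos b)"
proof (rule F.fleq_antisym)
  have ab: "fleq \<mu> 0 (finf \<mu> a b)" using E.finf_greatest[OF a b] .
  show "fleq \<nu> (T_ext_pos (finf \<mu> a b)) (finf \<nu> (T_ext_pos a) (T_ext_pos b))"
    using T_ext_pos_mono[OF ab E.finf_le1] T_ext_pos_mono[OF ab E.finf_le2] by (rule F.finf_greatest)
  have "fleq \<nu> (finf \<nu> w (T_ext_pos b)) (T_ext_pos (finf \<mu> a b))" if "w \<in> T_below a" for w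
  proof -
    obtain d where d: "w = T d" "d \<in> H" "fleq \<mu> 0 d" "fleq \<mu> d a"
      using \<open>w \<in> T_below a\<close> unfolding T_below_def by blast
    have "fleq \<nu> (finf \<nu> w' w) (T_ext_pos (finf \<mu> a b))" if "w' \<in> T_below b" for w'
    proof -
      obtain e where e: "w' = T e" "e \<in> H" "fleq \<mu> 0 e" "fleq \<mu> e b"
        using \<open>w' \<in> T_below b\<close> unfolding T_below_def by blast
      have "fleq \<mu> (finf \<mu> e d) (finf \<mu> a b)"
        using E.finf_mono[OF e(4) d(4)] by (simp add: E.finf_commute)
      then have "T (finf \<mu> e d) \<in> T_below (finf \<mu> a b)"
        unfolding T_below_def using E.finf_in_H[OF e(2) d(2)] E.finf_greatest[OF e(3) d(3)] by blast
      then show ?thesis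
        using is_sup_ub[OF is_sup_T_ext_pos[OF ab]] d(1,2) e(1,2) by (simp add: T_finf)
    qed
    then have "fleq \<nu> (finf \<nu> (T_ext_pos b) w) (T_ext_pos (finf \<mu> a b))"
      by (intro is_sup_least[OF F.is_sup_finf_right[OF is_sup_T_ext_pos[OF b]]]) auto
    then show ?thesis by (simp add: F.finf_commute)
  qed
  then show "fleq \<nu> (finf \<nu> (T_ext_pos a) (T_ext_pos b)) (T_ext_pos (finf \<mu> a b))"
    by (intro is_sup_least[OF F.is_sup_finf_right[OF is_sup_T_ext_pos[OF a]]]) auto
qed

definition T_ext :: "'a \<Rightarrow> 'b" where
  "T_ext x = T_ext_pos (fpos \<mu> x) - T_ext_pos (fneg \<mu> x)"

lemma T_ext_diff_fnonneg:
  assumes a: "fleq \<mu> 0 a" and b: "fleq \<mu> 0 b"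
  shows "T_ext (a - b) = T_ext_pos a - T_ext_pos b"
proof -
  have "fpos \<mu> (a - b) + b = a + fneg \<mu> (a - b)"
    using E.fpos_diff_fneg[of "a - b"] by (simp add: algebra_simps)
  then have "T_ext_pos (fpos \<mu> (a - b)) + T_ext_pos b = T_ext_pos a + T_ext_pos (fneg \<mu> (a - b))"
    using T_ext_pos_add[OF E.fsup_ge2 b] T_ext_pos_add[OF a E.fsup_ge2] by metis
  then show ?thesis unfolding T_ext_def by (simp add: algebra_simps)
qed

lemma T_ext_eq_pos: "fleq \<mu> 0 x \<Longrightarrow> T_ext x = T_ext_pos x"
  using T_ext_diff_fnonneg[of x 0] by simp

lemma T_ext_add: "T_ext (x + y) = T_ext x + T_ext y"
proof -
  have "x + y = (fpos \<mu> x + fpos \<mu> y) - (fneg \<mu> x + fneg \<mu> y)"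
    using E.fpos_diff_fneg[of x] E.fpos_diff_fneg[of y] by (simp add: algebra_simps)
  then have "T_ext (x + y) = T_ext_pos (fpos \<mu> x + fpos \<mu> y) - T_ext_pos (fneg \<mu> x + fneg \<mu> y)"
    using T_ext_diff_fnonneg E.fleq_add_mono[OF E.fsup_ge2 E.fsup_ge2] by (metis add_0)
  then show ?thesis unfolding T_ext_def by (simp add: T_ext_pos_add E.fsup_ge2 algebra_simps)
qed

lemma T_ext_scaleR: "T_ext (c *\<^sub>R x) = c *\<^sub>R T_ext x"
proof -
  consider "c > 0" | "c = 0" | "c < 0" by linarith
  then show ?thesis
  proof cases
    case 1
    have "c *\<^sub>R x = c *\<^sub>R fpos \<mu> x - c *\<^sub>R fneg \<mu> x"
      using E.fpos_diff_fneg[of x] by (metis scaleR_diff_right)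
    then have "T_ext (c *\<^sub>R x) = T_ext_pos (c *\<^sub>R fpos \<mu> x) - T_ext_pos (c *\<^sub>R fneg \<mu> x)"
      using T_ext_diff_fnonneg E.scaleR_fnonneg E.fsup_ge2 1 by (metis less_imp_le)
    then show ?thesis
      unfolding T_ext_def using T_ext_pos_scaleR[OF 1] E.fsup_ge2 by (simp add: scaleR_diff_right)
  next
    case 3
    then have c: "- c > 0" by simp
    have "c *\<^sub>R x = (- c) *\<^sub>R fneg \<mu> x - (- c) *\<^sub>R fpos \<mu> x"
      using E.fpos_diff_fneg[of x] by (metis minus_diff_eq scaleR_diff_right scaleR_minus_left)
    then have "T_ext (c *\<^sub>R x) = T_ext_pos ((- c) *\<^sub>R fneg \<mu> x) - T_ext_pos ((- c) *\<^sub>R fpos \<mu> x)"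
      using T_ext_diff_fnonneg E.scaleR_fnonneg E.fsup_ge2 c by (metis less_imp_le)
    then show ?thesis
      unfolding T_ext_def using T_ext_pos_scaleR[OF c] E.fsup_ge2 by (simp add: scaleR_diff_right)
  qed (simp add: T_ext_def)
qed

lemma linear_T_ext: "linear T_ext"
  by (rule linearI) (simp_all add: T_ext_add T_ext_scaleR)

lemma T_ext_minus: "T_ext (- x) = - T_ext x"
  using T_ext_scaleR[of "- 1" x] by simp

lemma T_ext_diff: "T_ext (x - y) = T_ext x - T_ext y"
  using T_ext_add[of x "- y"] by (simp add: T_ext_minus)

lemma T_ext_eq_T: "h \<in> H \<Longrightarrow> T_ext h = T h"
  using T_diff[of "fpos \<mu> h" "fneg \<mu> h"] E.fpos_diff_fneg[of h]
  by (simp add: T_ext_def T_ext_pos_eq_T E.fsup_in_H E.minus_in_H E.fsup_ge2)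

lemma T_ext_mono: "fleq \<mu> x y \<Longrightarrow> fleq \<nu> (T_ext x) (T_ext y)"
proof -
  assume "fleq \<mu> x y"
  then have "fleq \<mu> 0 (y - x)" using E.fleq_iff_diff_nonneg by blast
  then have "fleq \<nu> 0 (T_ext (y - x))" using T_ext_eq_pos T_ext_pos_fnonneg by simp
  then show ?thesis using T_ext_diff F.fleq_iff_diff_nonneg by simp
qed

lemma T_ext_fpos: "T_ext (fpos \<mu> x) = fpos \<nu> (T_ext x)"
proof -
  have "finf \<nu> (T_ext_pos (fpos \<mu> x)) (T_ext_pos (fneg \<mu> x)) = T_ext_pos (finf \<mu> (fpos \<mu> x) (fneg \<mu> x))"
    using T_ext_pos_finf[OF E.fsup_ge2[of 0 x] E.fsup_ge2[of 0 "- x"]] by simp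
  also have "\<dots> = 0" by (simp add: E.finf_fpos_fneg)
  finally have "finf \<nu> (T_ext_pos (fpos \<mu> x)) (T_ext_pos (fneg \<mu> x)) = 0" .
  then show ?thesis
    using F.fpos_diff_of_finf_eq_0 T_ext_eq_pos[OF E.fsup_ge2] unfolding T_ext_def by simp
qed

lemma T_ext_fsup: "T_ext (fsup \<mu> x y) = fsup \<nu> (T_ext x) (T_ext y)"
  using E.fsup_add_right[of "x - y" y 0] F.fsup_add_right[of "T_ext x - T_ext y" "T_ext y" 0]
  by (simp add: T_ext_add T_ext_fpos T_ext_diff)

lemma T_ext_fabs: "T_ext (fabs \<mu> x) = fabs \<nu> (T_ext x)"
  unfolding fabs_def T_ext_fsup T_ext_minus ..

lemma finf_T_eq_0_below_T_ext:
  assumes Y: "\<And>y. y \<in> Y \<Longrightarrow> fleq \<mu> 0 y" "Y \<noteq> {}" "down_directed \<mu> Y" "is_inf \<mu> UNIV Y 0"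
    and f: "fleq \<nu> 0 f" "\<And>y. y \<in> Y \<Longrightarrow> fleq \<nu> f (T_ext y)"
    and h: "h \<in> H" "fleq \<mu> 0 h"
  shows "finf \<nu> f (T h) = 0"
proof -
  define D where "D = (\<lambda>y. finf \<mu> y h) ` Y"
  have "D \<subseteq> H" unfolding D_def using Y(1) E.finf_in_H_of_fnonneg[OF _ h] by blast
  moreover have "D \<noteq> {}" unfolding D_def using Y(2) by blast
  moreover have "fleq \<mu> 0 d" if "d \<in> D" for d
    using that Y(1) h(2) unfolding D_def by (blast intro: E.finf_greatest)
  moreover have "down_directed \<mu> D"
    using Y(3) unfolding down_directed_def D_def by (blast intro: E.finf_mono[OF _ E.fleq_refl])
  moreover have "is_inf \<mu> H D 0"
  proof (rule is_infI)
    fix l assume "l \<in> H" "\<And>d. d \<in> D \<Longrightarrow> fleq \<mu> l d"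
    then show "fleq \<mu> l 0"
      unfolding D_def by (blast intro: is_inf_greatest[OF Y(4)] E.fleq_trans[OF _ E.finf_le1])
  qed (use \<open>\<And>d. d \<in> D \<Longrightarrow> fleq \<mu> 0 d\<close> in auto)
  ultimately have inf: "is_inf \<nu> UNIV (T ` D) 0" by (rule is_inf_T_image)
  have "fleq \<nu> (finf \<nu> f (T h)) (T (finf \<mu> y h))" if "y \<in> Y" for y
  proof -
    have "fleq \<nu> (finf \<nu> f (T h)) (finf \<nu> (T_ext_pos y) (T_ext_pos h))"
      using F.finf_mono[OF f(2)[OF that] F.fleq_refl] T_ext_eq_pos[OF Y(1)[OF that]] T_ext_pos_eq_T[OF h]
      by simp
    then show ?thesis
      using T_ext_pos_finf[OF Y(1)[OF that] h(2)] T_ext_pos_eq_T E.finf_in_H_of_fnonneg[OF Y(1)[OF that] h]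
        E.finf_greatest[OF Y(1)[OF that] h(2)] by simp
  qed
  then have "fleq \<nu> (finf \<nu> f (T h)) 0"
    using is_inf_greatest[OF inf] unfolding D_def by blast
  then show ?thesis using F.finf_greatest[OF f(1) T_fnonneg[OF h]] F.fleq_antisym by blast
qed

lemma is_inf_T_ext_image:
  assumes Y: "\<And>y. y \<in> Y \<Longrightarrow> fleq \<mu> 0 y" "Y \<noteq> {}" "down_directed \<mu> Y" "is_inf \<mu> UNIV Y 0"
  shows "is_inf \<nu> UNIV (T_ext ` Y) 0"
proof (rule is_infI)
  show "fleq \<nu> 0 a" if "a \<in> T_ext ` Y" for a
    using that Y(1) T_ext_eq_pos T_ext_pos_fnonneg by auto
  fix f assume f: "\<And>a. a \<in> T_ext ` Y \<Longrightarrow> fleq \<nu> f a"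
  have f_pos: "fleq \<nu> (fpos \<nu> f) (T_ext y)" if "y \<in> Y" for y
    using that f \<open>\<And>a. a \<in> T_ext ` Y \<Longrightarrow> fleq \<nu> 0 a\<close> by (blast intro: F.fsup_least)
  obtain y where y: "y \<in> Y" using Y(2) by blast
  have "fleq \<nu> (finf \<nu> (T_ext_pos y) (fpos \<nu> f)) 0"
  proof (rule is_sup_least[OF F.is_sup_finf_right[OF is_sup_T_ext_pos[OF Y(1)[OF y]]]])
    fix v assume "v \<in> (\<lambda>w. finf \<nu> w (fpos \<nu> f)) ` T_below y"
    then obtain h where "v = finf \<nu> (T h) (fpos \<nu> f)" "h \<in> H" "fleq \<mu> 0 h"
      unfolding T_below_def by blast
    then show "fleq \<nu> v 0"
      using finf_T_eq_0_below_T_ext[OF Y F.fsup_ge2 f_pos] by (simp add: F.finf_commute)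
  qed simp
  moreover have "finf \<nu> (T_ext_pos y) (fpos \<nu> f) = fpos \<nu> f"
    using F.finf_absorb2 f_pos[OF y] T_ext_eq_pos[OF Y(1)[OF y]] by simp
  ultimately show "fleq \<nu> f 0" using F.fsup_ge1 F.fleq_trans by metis
qed simp

lemma T_ext_order_continuous: "fuzzy_order_continuous TYPE('i) \<mu> UNIV \<nu> T_ext"
  unfolding fuzzy_order_continuous_def
proof (intro allI impI)
  fix I :: "'i set" and le x
  assume "directed_index I le \<and> (\<forall>\<alpha>\<in>I. x \<alpha> \<in> UNIV) \<and> fuzzy_order_conv \<mu> UNIV I le x 0"
  then have dir: "directed_index I le"
    and "\<exists>y. (\<forall>\<alpha>\<in>I. \<forall>\<beta>\<in>I. le \<alpha> \<beta> \<longrightarrow> fleq \<mu> (y \<beta>) (y \<alpha>)) \<and> is_inf \<mu> UNIV (y ` I) 0 \<and>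
            (\<forall>\<alpha>\<in>I. fleq \<mu> (fabs \<mu> (x \<alpha>)) (y \<alpha>))"
    unfolding fuzzy_order_conv_def by auto
  then obtain y where y_dec: "\<And>\<alpha> \<beta>. \<alpha> \<in> I \<Longrightarrow> \<beta> \<in> I \<Longrightarrow> le \<alpha> \<beta> \<Longrightarrow> fleq \<mu> (y \<beta>) (y \<alpha>)"
    and y_inf: "is_inf \<mu> UNIV (y ` I) 0" and y_dom: "\<And>\<alpha>. \<alpha> \<in> I \<Longrightarrow> fleq \<mu> (fabs \<mu> (x \<alpha>)) (y \<alpha>)"
    by blast
  have "fleq \<mu> 0 (y \<alpha>)" if "\<alpha> \<in> I" for \<alpha>
    using E.fleq_trans[OF E.fabs_fnonneg y_dom[OF that]] .
  moreover have "down_directed \<mu> (y ` I)"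
    using dir y_dec unfolding down_directed_def directed_index_def by (metis imageE imageI)
  moreover have "y ` I \<noteq> {}" using dir unfolding directed_index_def by blast
  ultimately have "is_inf \<nu> UNIV (T_ext ` y ` I) 0"
    using y_inf by (intro is_inf_T_ext_image) auto
  then show "fuzzy_order_conv \<nu> UNIV I le (T_ext \<circ> x) 0"
    unfolding fuzzy_order_conv_def using y_dec y_dom
    by (intro exI[of _ "T_ext \<circ> y"]) (auto simp: image_comp T_ext_fabs[symmetric] intro: T_ext_mono)
qed

end

theorem theorem4p16:
  fixes \<mu> :: "'a::real_vector \<Rightarrow> 'a \<Rightarrow> real"
    and \<nu> :: "'b::real_vector \<Rightarrow> 'b \<Rightarrow> real"
    and H :: "'a set"
    and T :: "'a \<Rightarrow> 'b"
  assumes E_riesz: "fuzzy_riesz_space \<mu>"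
    and E_arch: "fuzzy_archimedean \<mu>"
    and H_sub: "fuzzy_riesz_subspace \<mu> H"
    and H_dense: "fuzzy_order_dense \<mu> H"
    and H_dc: "fuzzy_dedekind_complete \<mu> H"
    and F_riesz: "fuzzy_riesz_space \<nu>"
    and F_arch: "fuzzy_archimedean \<nu>"
    and F_lat: "laterally_complete \<nu>"
    and T_hom: "lattice_hom_on \<mu> \<nu> H T"
    and T_oc: "fuzzy_order_continuous TYPE('a) \<mu> H \<nu> T"
  shows "\<exists>S :: 'a \<Rightarrow> 'b.
           (\<forall>x. fleq \<mu> 0 x \<longrightarrow>
                is_sup \<nu> UNIV {T h | h. h \<in> H \<and> fleq \<mu> 0 h \<and> fleq \<mu> h x} (S x)) \<and>
           (\<forall>h\<in>H. S h = T h) \<and>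
           linear S \<and>
           (\<forall>x y. S (fsup \<mu> x y) = fsup \<nu> (S x) (S y)) \<and>
           fuzzy_order_continuous TYPE('i) \<mu> UNIV \<nu> S"
proof -
  interpret lattice_hom_extension \<mu> H \<nu> T
    by unfold_locales (fact E_riesz E_arch H_sub H_dense H_dc F_riesz F_lat T_hom T_oc)+
  show ?thesis
  proof (intro exI[of _ T_ext] conjI allI impI ballI)
    fix x assume "fleq \<mu> 0 x"
    then show "is_sup \<nu> UNIV {T h | h. h \<in> H \<and> fleq \<mu> 0 h \<and> fleq \<mu> h x} (T_ext x)"
      using is_sup_T_ext_pos T_ext_eq_pos unfolding T_below_def by simp
  qed (simp_all add: T_ext_eq_T linear_T_ext T_ext_fsup T_ext_order_continuous)
qed

end
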